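(* Let $(\alpha_n)_{n\in\mathbb{N}^+}$ be a sequence in $(0,1)$ converging to $\alpha\in(0,1)$, with continued fraction expansions $\alpha_n=[0;a_{n1},a_{n2},\dots]$ and $\alpha=[0;a_1,a_2,\dots]$, and write $\alpha_n=[0;a_{n1},\dots,a_{ni},r_{ni}]$, $\alpha=[0;a_1,\dots,a_i,r_i]$. Suppose that for some $i\in\mathbb{N}^+$ the numbers $a_{n1},\dots,a_{ni}$ ($n\in\mathbb{N}^+$) are bounded, and that there are numbers $R_{i,\min},R_{i,\max}$ with $1<R_{i,\min}\le r_{ni}\le R_{i,\max}<\infty$ for all $n$. Then there is $n_0\in\mathbb{N}^+$ such that for each $1\le j\le i$, $a_{nj}$ is independent of $n$ for $n>n_0$, and $a_j=\lim_{\nu\to\infty}a_{\nu j}$; in particular $a_j=a_{nj}$ for all sufficiently large $n$.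
   Context: Continued fraction conventions: $[a_0;a_1,\dots,a_n]$ denotes $a_0+1/(a_1+1/(a_2+\cdots+1/a_n))$ with $a_0\in\mathbb{Z}$, $a_k\in\mathbb{N}^+$ for $1\le k<n$, and (for uniqueness) last element $a_n>1$. Every real number is identified with its unique continued fraction; a terminating expansion $[a_0;a_1,\dots,a_n]$ is also written as the nonterminating form $[a_0;a_1,\dots,a_n,0,0,\dots]$ (i.e. $a_i=0$ for $i>n$), with $[a_0;0,0,\dots]=a_0$. For $\alpha=[a_0;a_1,a_2,\dots]$ and $i\ge1$, the truncated form is $\alpha=[a_0;a_1,\dots,a_i,r_i]$ where $r_i:=a_{i+1}+[0;a_{i+2},a_{i+3},\dots]$. *)

theory Defs
  imports Complex_Main
begin

text \<open>For alpha = [a0; a1, a2, ...] one has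
  cf_rem alpha (i+1) = r_i = a_(i+1) + [0; a_(i+2), ...] (and 0 after termination).\<close>
fun cf_rem :: "real \<Rightarrow> nat \<Rightarrow> real" where
  "cf_rem x 0 = x"
| "cf_rem x (Suc k) = (if frac (cf_rem x k) = 0 then 0 else 1 / frac (cf_rem x k))"

text \<open>Partial quotients a_k = floor of the k-th complete quotient; a_k = 0 for k
  beyond the end of a terminating expansion (whose last element is > 1).\<close>
definition cf_digit :: "real \<Rightarrow> nat \<Rightarrow> int" where
  "cf_digit x k = \<lfloor>cf_rem x k\<rfloor>"

end

theory Submission
  imports Defs
begin

text \<open>The fractional part of x_n's j-th complete quotient is the reciprocal of the
  (j+1)-st one; the bounds R_min, R_max on r_(n,i) together with the bounded digits therefore
  keep these fractional parts, for every j \<le> i, inside a fixed compact subinterval of (0,1).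
  Away from the integers, floor and frac are continuous, so by induction on j the complete
  quotients of x_n converge to those of the limit and their floors eventually agree.\<close>

declare cf_rem.simps(2) [simp del]

definition frac_separated :: "(nat \<Rightarrow> real) \<Rightarrow> bool" where
  "frac_separated X \<longleftrightarrow>
     (\<exists>lo hi. 0 < lo \<and> hi < 1 \<and> (\<forall>\<^sub>F n in sequentially. lo \<le> frac (X n) \<and> frac (X n) \<le> hi))"

lemma eventually_floor_eq_of_frac_separated:
  fixes X :: "nat \<Rightarrow> real"
  assumes "X \<longlonglongrightarrow> L" and "frac_separated X"
  shows "\<forall>\<^sub>F n in sequentially. \<lfloor>X n\<rfloor> = \<lfloor>L\<rfloor>"
proof -
  obtain lo hi where lo: "0 < lo" and hi: "hi < 1"
    and sep: "\<forall>\<^sub>F n in sequentially. lo \<le> frac (X n) \<and> frac (X n) \<le> hi"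
    using assms(2) by (auto simp: frac_separated_def)
  have "\<forall>\<^sub>F n in sequentially. dist (X n) L < min lo (1 - hi)"
    using tendstoD[OF assms(1), of "min lo (1 - hi)"] lo hi by simp
  with sep show ?thesis
  proof eventually_elim
    case (elim n)
    then have close: "\<bar>X n - L\<bar> < min lo (1 - hi)" by (simp add: dist_real_def)
    have decomp: "X n = of_int \<lfloor>X n\<rfloor> + frac (X n)" by (simp add: frac_def)
    have "of_int \<lfloor>X n\<rfloor> \<le> L" using close decomp elim by linarith
    moreover have "L < of_int \<lfloor>X n\<rfloor> + 1" using close decomp elim by linarith
    ultimately show ?case using floor_unique[of "\<lfloor>X n\<rfloor>" L] by simp
  qed
qed

lemma tendsto_frac_of_frac_separated:
  fixes X :: "nat \<Rightarrow> real"
  assumes "X \<longlonglongrightarrow> L" and "frac_separated X"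
  shows "(\<lambda>n. frac (X n)) \<longlonglongrightarrow> frac L"
proof -
  have "(\<lambda>n. X n - of_int \<lfloor>L\<rfloor>) \<longlonglongrightarrow> frac L"
    using assms(1) unfolding frac_def by (intro tendsto_intros)
  moreover have "\<forall>\<^sub>F n in sequentially. X n - of_int \<lfloor>L\<rfloor> = frac (X n)"
    using eventually_floor_eq_of_frac_separated[OF assms] by eventually_elim (simp add: frac_def)
  ultimately show ?thesis by (rule Lim_transform_eventually)
qed

lemma frac_separated_limit_frac_pos:
  fixes X :: "nat \<Rightarrow> real"
  assumes "X \<longlonglongrightarrow> L" and "frac_separated X"
  shows "frac L > 0"
proof -
  obtain lo hi where "0 < lo" and sep: "\<forall>\<^sub>F n in sequentially. lo \<le> frac (X n) \<and> frac (X n) \<le> hi"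
    using assms(2) by (auto simp: frac_separated_def)
  have "lo \<le> frac L"
    using sep by (intro tendsto_lowerbound[OF tendsto_frac_of_frac_separated[OF assms]])
      (auto elim: eventually_mono)
  with \<open>0 < lo\<close> show ?thesis by linarith
qed

lemma cf_rem_Suc_eq:
  assumes "frac (cf_rem x k) \<noteq> 0"
  shows "cf_rem x (Suc k) = 1 / frac (cf_rem x k)"
  using assms by (simp add: cf_rem.simps(2))

lemma frac_cf_rem_eq:
  assumes "cf_rem x (Suc k) \<noteq> 0"
  shows "frac (cf_rem x k) = 1 / cf_rem x (Suc k)"
  using assms by (auto simp: cf_rem.simps(2) split: if_splits)

lemma frac_cf_rem_bounds:
  assumes "0 < a" and "a \<le> cf_rem x (Suc k)" and "cf_rem x (Suc k) \<le> b"
  shows "1 / b \<le> frac (cf_rem x k) \<and> frac (cf_rem x k) \<le> 1 / a"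
  using assms frac_cf_rem_eq[of x k] by (auto intro: divide_left_mono)

lemma frac_separated_cf_rem_of_bounds:
  fixes xs :: "nat \<Rightarrow> real"
  assumes "1 < a"
    and "\<forall>\<^sub>F n in sequentially. a \<le> cf_rem (xs n) (Suc k) \<and> cf_rem (xs n) (Suc k) \<le> b"
  shows "frac_separated (\<lambda>n. cf_rem (xs n) k)"
  unfolding frac_separated_def
proof (intro exI conjI)
  have "a \<le> b"
    using eventually_happens'[OF sequentially_bot assms(2)] by (blast intro: order_trans)
  with assms(1) show "0 < 1 / b" and "1 / a < 1" by auto
  show "\<forall>\<^sub>F n in sequentially. 1 / b \<le> frac (cf_rem (xs n) k) \<and> frac (cf_rem (xs n) k) \<le> 1 / a"
    using assms(2)
  proof eventually_elim
    case (elim n)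
    then show ?case using assms(1) by (intro frac_cf_rem_bounds) auto
  qed
qed

text \<open>A complete quotient with fractional part in [lo, hi] and digit at most B lies in
  [1 + lo, B + hi]; note that its digit is at least 1 since it is a reciprocal of a number in (0,1).\<close>

lemma frac_separated_cf_rem_pred:
  fixes xs :: "nat \<Rightarrow> real"
  assumes sep: "frac_separated (\<lambda>n. cf_rem (xs n) (Suc k))"
    and digits: "\<forall>\<^sub>F n in sequentially. cf_digit (xs n) (Suc k) \<le> B"
  shows "frac_separated (\<lambda>n. cf_rem (xs n) k)"
proof -
  obtain lo hi where lo: "0 < lo" and hi: "hi < 1"
    and ev: "\<forall>\<^sub>F n in sequentially. lo \<le> frac (cf_rem (xs n) (Suc k)) \<and> frac (cf_rem (xs n) (Suc k)) \<le> hi"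
    using sep by (auto simp: frac_separated_def)
  have "\<forall>\<^sub>F n in sequentially. 1 + lo \<le> cf_rem (xs n) (Suc k) \<and> cf_rem (xs n) (Suc k) \<le> B + hi"
    using ev digits
  proof eventually_elim
    case (elim n)
    define y where "y = cf_rem (xs n) (Suc k)"
    have "y \<noteq> 0" using elim lo by (auto simp: y_def)
    then have "y = 1 / frac (cf_rem (xs n) k)" "frac (cf_rem (xs n) k) \<noteq> 0"
      by (auto simp: y_def cf_rem.simps(2) split: if_splits)
    moreover have "0 \<le> frac (cf_rem (xs n) k)" "frac (cf_rem (xs n) k) < 1"
      by (rule frac_ge_0, rule frac_lt_1)
    ultimately have "y > 1" by simp
    then have "1 \<le> \<lfloor>y\<rfloor>" by linarith
    moreover have "y = of_int \<lfloor>y\<rfloor> + frac y" by (simp add: frac_def)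
    moreover have "\<lfloor>y\<rfloor> \<le> B" using elim by (simp add: y_def cf_digit_def)
    ultimately have "1 + lo \<le> y \<and> y \<le> B + hi" using elim by (simp only: y_def) linarith
    then show ?case by (simp add: y_def)
  qed
  then show ?thesis using lo by (intro frac_separated_cf_rem_of_bounds) auto
qed

lemma tendsto_cf_rem_Suc:
  fixes xs :: "nat \<Rightarrow> real"
  assumes lim: "(\<lambda>n. cf_rem (xs n) k) \<longlonglongrightarrow> cf_rem x k"
    and sep: "frac_separated (\<lambda>n. cf_rem (xs n) k)"
  shows "(\<lambda>n. cf_rem (xs n) (Suc k)) \<longlonglongrightarrow> cf_rem x (Suc k)"
proof -
  have pos: "frac (cf_rem x k) > 0" by (rule frac_separated_limit_frac_pos[OF lim sep])
  have "(\<lambda>n. 1 / frac (cf_rem (xs n) k)) \<longlonglongrightarrow> 1 / frac (cf_rem x k)"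
    using tendsto_frac_of_frac_separated[OF lim sep] pos by (intro tendsto_intros) auto
  moreover have "\<forall>\<^sub>F n in sequentially. 1 / frac (cf_rem (xs n) k) = cf_rem (xs n) (Suc k)"
    using sep unfolding frac_separated_def
    by (auto elim!: eventually_mono intro: cf_rem_Suc_eq[symmetric])
  ultimately have "(\<lambda>n. cf_rem (xs n) (Suc k)) \<longlonglongrightarrow> 1 / frac (cf_rem x k)"
    by (rule Lim_transform_eventually)
  with pos show ?thesis by (simp add: cf_rem_Suc_eq)
qed

theorem eventually_cf_digit_eq:
  fixes xs :: "nat \<Rightarrow> real"
  assumes lim: "xs \<longlonglongrightarrow> x" and "1 < Rmin"
    and r_bounds: "\<forall>\<^sub>F n in sequentially. Rmin \<le> cf_rem (xs n) (Suc i) \<and> cf_rem (xs n) (Suc i) \<le> Rmax"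
    and digits: "\<forall>\<^sub>F n in sequentially. \<forall>j\<in>{1..i}. cf_digit (xs n) j \<le> B"
  shows "\<forall>\<^sub>F n in sequentially. \<forall>j\<le>i. cf_digit (xs n) j = cf_digit x j"
proof -
  have sep: "frac_separated (\<lambda>n. cf_rem (xs n) j)" if "j \<le> i" for j
    using that
  proof (induction j rule: inc_induct)
    case base
    show ?case using \<open>1 < Rmin\<close> r_bounds by (rule frac_separated_cf_rem_of_bounds)
  next
    case (step j)
    have "\<forall>\<^sub>F n in sequentially. cf_digit (xs n) (Suc j) \<le> B"
      using digits step.hyps by (auto elim: eventually_mono)
    with step.IH show ?case by (rule frac_separated_cf_rem_pred)
  qed
  have conv: "(\<lambda>n. cf_rem (xs n) j) \<longlonglongrightarrow> cf_rem x j" if "j \<le> i" for j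
    using that by (induction j) (use lim sep tendsto_cf_rem_Suc in auto)
  have "\<forall>j\<in>{..i}. \<forall>\<^sub>F n in sequentially. cf_digit (xs n) j = cf_digit x j"
    using eventually_floor_eq_of_frac_separated[OF conv sep] by (simp add: cf_digit_def)
  then have "\<forall>\<^sub>F n in sequentially. \<forall>j\<in>{..i}. cf_digit (xs n) j = cf_digit x j"
    by (intro eventually_ball_finite) auto
  then show ?thesis by (auto elim: eventually_mono)
qed

theorem lemma1:
  fixes \<alpha>s :: "nat \<Rightarrow> real" and \<alpha> :: real and i :: nat
    and Rmin Rmax :: real
  assumes seq_in: "\<forall>n\<ge>1. 0 < \<alpha>s n \<and> \<alpha>s n < 1"
    and lim: "\<alpha>s \<longlonglongrightarrow> \<alpha>"
    and alpha_in: "0 < \<alpha>" "\<alpha> < 1"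
    and i_pos: "i \<ge> 1"
    and bdd: "\<exists>B. \<forall>n\<ge>1. \<forall>j\<in>{1..i}. cf_digit (\<alpha>s n) j \<le> B"
    and Rmin_gt: "1 < Rmin"
    and r_bounds: "\<forall>n\<ge>1. Rmin \<le> cf_rem (\<alpha>s n) (i + 1) \<and> cf_rem (\<alpha>s n) (i + 1) \<le> Rmax"
  shows "\<exists>n0\<ge>1. \<forall>j\<in>{1..i}.
           (\<exists>c. \<forall>n>n0. cf_digit (\<alpha>s n) j = c)
         \<and> (\<lambda>\<nu>. real_of_int (cf_digit (\<alpha>s \<nu>) j)) \<longlonglongrightarrow> real_of_int (cf_digit \<alpha> j)
         \<and> (\<forall>n>n0. cf_digit \<alpha> j = cf_digit (\<alpha>s n) j)"
proof -
  obtain B where "\<forall>n\<ge>1. \<forall>j\<in>{1..i}. cf_digit (\<alpha>s n) j \<le> B" using bdd by blast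
  then have digits: "\<forall>\<^sub>F n in sequentially. \<forall>j\<in>{1..i}. cf_digit (\<alpha>s n) j \<le> B"
    by (auto simp: eventually_sequentially)
  have "\<forall>\<^sub>F n in sequentially. Rmin \<le> cf_rem (\<alpha>s n) (Suc i) \<and> cf_rem (\<alpha>s n) (Suc i) \<le> Rmax"
    using r_bounds by (auto simp: eventually_sequentially)
  then have "\<forall>\<^sub>F n in sequentially. \<forall>j\<le>i. cf_digit (\<alpha>s n) j = cf_digit \<alpha> j"
    using eventually_cf_digit_eq[OF lim Rmin_gt _ digits] by blast
  then obtain N where N: "\<And>n j. N \<le> n \<Longrightarrow> j \<le> i \<Longrightarrow> cf_digit (\<alpha>s n) j = cf_digit \<alpha> j"
    by (auto simp: eventually_sequentially)
  show ?thesis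
  proof (intro exI[of _ "Suc N"] conjI ballI)
    fix j assume "j \<in> {1..i}"
    then have eq: "\<And>n. N \<le> n \<Longrightarrow> cf_digit (\<alpha>s n) j = cf_digit \<alpha> j" using N by simp
    show "\<exists>c. \<forall>n>Suc N. cf_digit (\<alpha>s n) j = c" and "\<forall>n>Suc N. cf_digit \<alpha> j = cf_digit (\<alpha>s n) j"
      using eq by auto
    show "(\<lambda>\<nu>. real_of_int (cf_digit (\<alpha>s \<nu>) j)) \<longlonglongrightarrow> real_of_int (cf_digit \<alpha> j)"
      using eq by (intro tendsto_eventually) (auto simp: eventually_sequentially)
  qed simp
qed

end
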